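(* Let $T:\mathbb{Z}_{\ge 0}\to\mathbb{R}$ satisfy $T(mn) = T(m)T(n) + T(m-1)T(n-1)$ for all integers $m,n\ge 1$, and suppose $T(0)=0$ and $T(1)=1$. Then $T(2)\in\{0,1,3\}$. *)

theory Defs
  imports Complex_Main
begin

end

theory Submission
  imports Defs
begin

text \<open>Write \<open>a = T 2\<close> and \<open>b = T 3\<close>. Evaluating the recurrence on two different factorisations
  of 12, 18 and 30 (and of 16) expresses everything up to \<open>T 30\<close> through \<open>a\<close> and \<open>b\<close>, and
  yields two equations that are linear in \<open>b\<close>. Eliminating \<open>b\<close> leaves
  \<open>a (a - 1)\<^sup>2 (a - 3) (a\<^sup>2 + a + 1) = 0\<close>, whose only real roots are 0, 1 and 3.\<close>

lemma real_roots_of_resultant: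
  fixes a b :: real
  assumes first: "b * (a\<^sup>2 + 2 * a - 1) = 3 * a ^ 3 + a"
    and second: "b * (2 * a\<^sup>2 - a + 1) = a ^ 4 + a\<^sup>2 + 2 * a"
  shows "a \<in> {0, 1, 3}"
proof -
  have "(3 * a ^ 3 + a) * (2 * a\<^sup>2 - a + 1) = (a ^ 4 + a\<^sup>2 + 2 * a) * (a\<^sup>2 + 2 * a - 1)"
    by (metis first second mult.assoc mult.commute)
  then have "(a * (a - 1)\<^sup>2 * (a - 3)) * (a\<^sup>2 + a + 1) = 0"
    by (simp add: algebra_simps power2_eq_square power3_eq_cube power4_eq_xxxx)
  moreover have "a\<^sup>2 + a + 1 > 0"
    using zero_le_power2[of "a + 1/2"] by (simp add: power2_eq_square algebra_simps)
  ultimately have "a * (a - 1)\<^sup>2 * (a - 3) = 0"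
    by simp
  then show ?thesis
    by auto
qed

context
  fixes T :: "nat \<Rightarrow> real"
  assumes rec: "\<And>m n. m \<ge> 1 \<Longrightarrow> n \<ge> 1 \<Longrightarrow> T (m * n) = T m * T n + T (m - 1) * T (n - 1)"
    and T_1: "T 1 = 1"
begin

private lemma T_Suc_0: "T (Suc 0) = 1"
  using T_1 by simp

lemma T_4: "T 4 = (T 2)\<^sup>2 + 1"
  using rec[of 2 2] by (simp add: T_Suc_0 power2_eq_square)

lemma T_6: "T 6 = T 2 * T 3 + T 2"
  using rec[of 2 3] by (simp add: T_Suc_0)

lemma T_8: "T 8 = T 2 * T 4 + T 3"
  using rec[of 2 4] by (simp add: T_Suc_0)

lemma T_9: "T 9 = (T 3)\<^sup>2 + (T 2)\<^sup>2"
  using rec[of 3 3] by (simp add: T_Suc_0 power2_eq_square)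

lemma T_5: "T 5 = T 3 + T 2 * T 3 - (T 2)\<^sup>2"
proof -
  have "T 12 = T 2 * T 6 + T 5"
    using rec[of 2 6] by (simp add: T_Suc_0)
  moreover have "T 12 = T 3 * T 4 + T 2 * T 3"
    using rec[of 3 4] by simp
  ultimately show ?thesis
    using T_4 T_6 by (simp add: algebra_simps power2_eq_square)
qed

lemma T_7: "T 7 = (T 4)\<^sup>2 + (T 3)\<^sup>2 - T 2 * T 8"
proof -
  have "T 16 = T 2 * T 8 + T 7"
    using rec[of 2 8] by (simp add: T_Suc_0)
  moreover have "T 16 = T 4 * T 4 + T 3 * T 3"
    using rec[of 4 4] by simp
  ultimately show ?thesis
    by (simp add: power2_eq_square)
qed

lemma T_3_first_relation: "T 3 * ((T 2)\<^sup>2 + 2 * T 2 - 1) = 3 * T 2 ^ 3 + T 2"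
proof -
  have "T 18 = T 2 * T 9 + T 8"
    using rec[of 2 9] by (simp add: T_Suc_0)
  moreover have "T 18 = T 3 * T 6 + T 2 * T 5"
    using rec[of 3 6] by simp
  ultimately show ?thesis
    using T_4 T_5 T_6 T_8 T_9 by (simp add: algebra_simps power2_eq_square power3_eq_cube)
qed

lemma T_3_second_relation: "T 3 * (2 * (T 2)\<^sup>2 - T 2 + 1) = T 2 ^ 4 + (T 2)\<^sup>2 + 2 * T 2"
proof -
  have "T 30 = T 2 * T 15 + T 14"
    using rec[of 2 15] by (simp add: T_Suc_0)
  moreover have "T 30 = T 3 * T 10 + T 2 * T 9"
    using rec[of 3 10] by simp
  moreover have "T 15 = T 3 * T 5 + T 2 * T 4"
    using rec[of 3 5] by simp
  moreover have "T 14 = T 2 * T 7 + T 6"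
    using rec[of 2 7] by (simp add: T_Suc_0)
  moreover have "T 10 = T 2 * T 5 + T 4"
    using rec[of 2 5] by (simp add: T_Suc_0)
  ultimately show ?thesis
    using T_4 T_5 T_6 T_7 T_8 T_9
    by (simp add: algebra_simps power2_eq_square power3_eq_cube power4_eq_xxxx)
qed

end

theorem lemma11:
  fixes T :: "nat \<Rightarrow> real"
  assumes rec: "\<And>m n. m \<ge> 1 \<Longrightarrow> n \<ge> 1 \<Longrightarrow> T (m * n) = T m * T n + T (m - 1) * T (n - 1)"
    and "T 0 = 0" and "T 1 = 1"
  shows "T 2 \<in> {0, 1, 3}"
  using real_roots_of_resultant T_3_first_relation[OF rec \<open>T 1 = 1\<close>] T_3_second_relation[OF rec \<open>T 1 = 1\<close>]
  by blast

end
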